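(* Let $p$ be a prime and $(G,\theta)$ an oriented profinite group. Then $(G,\theta)$ is cyclotomic if and only if for every natural number $n$ and every closed subgroup $H\le G$, the kernel of the map $H^2(H,\mathbb{Z}_p(1)/p^{n-1})\to H^2(H,\mathbb{Z}_p(1)/p^{n})$ induced by the injection in the short exact sequence $0\to\mathbb{Z}_p(1)/p^{n-1}\to\mathbb{Z}_p(1)/p^{n}\to\mathbb{Z}_p(1)/p\to0$ is trivial.
   Context: An orientation of a profinite group $G$ is a continuous homomorphism $\theta:G\to\mathbb{Z}_p^\times$ whose image lies in $1+p\mathbb{Z}_p$ (so the induced action on $\mathbb{F}_p$ is trivial). $\mathbb{Z}_p(1)$ is $\mathbb{Z}_p$ with $G$-action $g.x=\theta(g)x$, and $\mathbb{Z}_p(1)/p^m=\mathbb{Z}_p(1)/p^m\mathbb{Z}_p(1)$; the injection $\mathbb{Z}_p(1)/p^{n-1}\to\mathbb{Z}_p(1)/p^n$ is induced by multiplication by $p$. $(G,\theta)$ is cyclotomic if for every closed subgroup $H\le G$ and every $m$, the natural map $H^1(H,\mathbb{Z}_p(1)/p^m)\to H^1(H,\mathbb{Z}_p(1)/p)$ of continuous cohomology is surjective. *)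

theory Defs
  imports "HOL-Analysis.Analysis" "HOL-Algebra.Group" "HOL-Number_Theory.Cong"
begin

definition topological_group :: "('g, 'b) monoid_scheme \<Rightarrow> 'g topology \<Rightarrow> bool" where
  "topological_group G T \<longleftrightarrow> group G \<and> topspace T = carrier G \<and>
     continuous_map (prod_topology T T) T (\<lambda>(x, y). x \<otimes>\<^bsub>G\<^esub> y) \<and>
     continuous_map T T (\<lambda>x. inv\<^bsub>G\<^esub> x)"

definition totally_disconnected_space :: "'a topology \<Rightarrow> bool" where
  "totally_disconnected_space T \<longleftrightarrow>
     (\<forall>S. connectedin T S \<longrightarrow> (\<forall>x\<in>S. \<forall>y\<in>S. x = y))"

definition profinite_group :: "('g, 'b) monoid_scheme \<Rightarrow> 'g topology \<Rightarrow> bool" where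
  "profinite_group G T \<longleftrightarrow> topological_group G T \<and> compact_space T \<and>
     Hausdorff_space T \<and> totally_disconnected_space T"

definition closed_subgroup :: "'g set \<Rightarrow> ('g, 'b) monoid_scheme \<Rightarrow> 'g topology \<Rightarrow> bool" where
  "closed_subgroup H G T \<longleftrightarrow> subgroup H G \<and> closedin T H"

text \<open>An element of Z_p is represented as a compatible sequence (x m) with x m in {0..<p^m}
and x (m+1) = x m mod p^m, i.e. as an element of the inverse limit of the Z/p^m.\<close>
definition padic_int :: "int \<Rightarrow> (nat \<Rightarrow> int) \<Rightarrow> bool" where
  "padic_int p x \<longleftrightarrow> (\<forall>m. 0 \<le> x m \<and> x m < p ^ m \<and> x (Suc m) mod p ^ m = x m)"

text \<open>An orientation: a continuous homomorphism theta: G \<rightarrow> Z_p^x with image in 1 + pZ_p.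
Continuity into the inverse limit Z_p = lim Z/p^m means each component g \<mapsto> theta g m
is continuous into the discrete set Z/p^m.\<close>
definition orientation :: "int \<Rightarrow> ('g, 'b) monoid_scheme \<Rightarrow> 'g topology \<Rightarrow> ('g \<Rightarrow> nat \<Rightarrow> int) \<Rightarrow> bool" where
  "orientation p G T \<theta> \<longleftrightarrow>
     (\<forall>g\<in>carrier G. padic_int p (\<theta> g)) \<and>
     (\<forall>g\<in>carrier G. \<forall>h\<in>carrier G. \<forall>m. \<theta> (g \<otimes>\<^bsub>G\<^esub> h) m = (\<theta> g m * \<theta> h m) mod p ^ m) \<and>
     (\<forall>g\<in>carrier G. \<theta> g 1 = 1) \<and>
     (\<forall>m. continuous_map T euclidean (\<lambda>g. \<theta> g m))"

text \<open>Cochains are int-valued functions, read modulo p^m; G acts on Z_p(1)/p^m by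
g.x = theta(g) x. Continuity means continuity into the discrete module Z/p^m.\<close>

definition cochain1 :: "'g topology \<Rightarrow> 'g set \<Rightarrow> int \<Rightarrow> ('g \<Rightarrow> int) \<Rightarrow> bool" where
  "cochain1 T H q f \<longleftrightarrow> continuous_map (subtopology T H) euclidean (\<lambda>x. f x mod q)"

definition cochain2 :: "'g topology \<Rightarrow> 'g set \<Rightarrow> int \<Rightarrow> ('g \<Rightarrow> 'g \<Rightarrow> int) \<Rightarrow> bool" where
  "cochain2 T H q c \<longleftrightarrow>
     continuous_map (subtopology (prod_topology T T) (H \<times> H)) euclidean (\<lambda>(x, y). c x y mod q)"

definition cocycle1 :: "int \<Rightarrow> ('g, 'b) monoid_scheme \<Rightarrow> 'g topology \<Rightarrow> ('g \<Rightarrow> nat \<Rightarrow> int)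
    \<Rightarrow> 'g set \<Rightarrow> nat \<Rightarrow> ('g \<Rightarrow> int) \<Rightarrow> bool" where
  "cocycle1 p G T \<theta> H m f \<longleftrightarrow> cochain1 T H (p ^ m) f \<and>
     (\<forall>g\<in>H. \<forall>h\<in>H. [f (g \<otimes>\<^bsub>G\<^esub> h) = f g + \<theta> g m * f h] (mod p ^ m))"

definition coboundary1 :: "int \<Rightarrow> ('g \<Rightarrow> nat \<Rightarrow> int) \<Rightarrow> 'g set \<Rightarrow> nat \<Rightarrow> ('g \<Rightarrow> int) \<Rightarrow> bool" where
  "coboundary1 p \<theta> H m f \<longleftrightarrow>
     (\<exists>a::int. \<forall>g\<in>H. [f g = \<theta> g m * a - a] (mod p ^ m))"

definition cocycle2 :: "int \<Rightarrow> ('g, 'b) monoid_scheme \<Rightarrow> 'g topology \<Rightarrow> ('g \<Rightarrow> nat \<Rightarrow> int)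
    \<Rightarrow> 'g set \<Rightarrow> nat \<Rightarrow> ('g \<Rightarrow> 'g \<Rightarrow> int) \<Rightarrow> bool" where
  "cocycle2 p G T \<theta> H m c \<longleftrightarrow> cochain2 T H (p ^ m) c \<and>
     (\<forall>g\<in>H. \<forall>h\<in>H. \<forall>k\<in>H.
        [\<theta> g m * c h k - c (g \<otimes>\<^bsub>G\<^esub> h) k + c g (h \<otimes>\<^bsub>G\<^esub> k) - c g h = 0] (mod p ^ m))"

definition coboundary2 :: "int \<Rightarrow> ('g, 'b) monoid_scheme \<Rightarrow> 'g topology \<Rightarrow> ('g \<Rightarrow> nat \<Rightarrow> int)
    \<Rightarrow> 'g set \<Rightarrow> nat \<Rightarrow> ('g \<Rightarrow> 'g \<Rightarrow> int) \<Rightarrow> bool" where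
  "coboundary2 p G T \<theta> H m c \<longleftrightarrow>
     (\<exists>b. cochain1 T H (p ^ m) b \<and>
        (\<forall>g\<in>H. \<forall>h\<in>H. [c g h = \<theta> g m * b h - b (g \<otimes>\<^bsub>G\<^esub> h) + b g] (mod p ^ m)))"

definition H1_reduction_surjective :: "int \<Rightarrow> ('g, 'b) monoid_scheme \<Rightarrow> 'g topology
    \<Rightarrow> ('g \<Rightarrow> nat \<Rightarrow> int) \<Rightarrow> 'g set \<Rightarrow> nat \<Rightarrow> bool" where
  "H1_reduction_surjective p G T \<theta> H m \<longleftrightarrow>
     (\<forall>f. cocycle1 p G T \<theta> H 1 f \<longrightarrow>
        (\<exists>f'. cocycle1 p G T \<theta> H m f' \<and> coboundary1 p \<theta> H 1 (\<lambda>g. f g - f' g)))"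

definition cyclotomic :: "int \<Rightarrow> ('g, 'b) monoid_scheme \<Rightarrow> 'g topology \<Rightarrow> ('g \<Rightarrow> nat \<Rightarrow> int) \<Rightarrow> bool" where
  "cyclotomic p G T \<theta> \<longleftrightarrow>
     (\<forall>H m. closed_subgroup H G T \<longrightarrow> m \<ge> 1 \<longrightarrow> H1_reduction_surjective p G T \<theta> H m)"

text \<open>The map H^2(H, Z_p(1)/p^(n-1)) \<rightarrow> H^2(H, Z_p(1)/p^n) induced by multiplication by p
has trivial kernel.\<close>
definition H2_mult_p_injective :: "int \<Rightarrow> ('g, 'b) monoid_scheme \<Rightarrow> 'g topology
    \<Rightarrow> ('g \<Rightarrow> nat \<Rightarrow> int) \<Rightarrow> 'g set \<Rightarrow> nat \<Rightarrow> bool" where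
  "H2_mult_p_injective p G T \<theta> H n \<longleftrightarrow>
     (\<forall>c. cocycle2 p G T \<theta> H (n - 1) c \<longrightarrow>
        coboundary2 p G T \<theta> H n (\<lambda>g h. p * c g h) \<longrightarrow>
        coboundary2 p G T \<theta> H (n - 1) c)"

end

(* Both conditions express exactness of the long cohomology sequence of
   0 -> Z/p^k -> Z/p^(k+1) -> Z/p -> 0 (multiplication by p, then reduction): reduction
   H^1(Z/p^(k+1)) -> H^1(Z/p) is onto iff the connecting map H^1(Z/p) -> H^2(Z/p^k) vanishes iff
   multiplication by p on H^2 is injective.
   Since theta = 1 mod p, a mod-p cocycle f, lifted to its residues, has coboundary divisible by p,
   and (1/p) d f is the connecting cocycle; a primitive e of it mod p^k corrects the lift to the
   cocycle f - p e mod p^(k+1). Conversely, if p c = d b mod p^(k+1), then b is a mod-p cocycle;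
   a lift f' of it gives b = f' + p e, hence c = d e mod p^k. *)

theory Submission
  imports Defs
begin

instance prod :: (discrete_topology, discrete_topology) discrete_topology
proof
  fix A :: "('a \<times> 'b) set"
  have "open (\<Union>z\<in>A. {fst z} \<times> {snd z})"
    by (intro open_UN ballI open_Times open_discrete)
  moreover have "(\<Union>z\<in>A. {fst z} \<times> {snd z}) = A" by auto
  ultimately show "open A" by simp
qed

lemma continuous_map_discrete_compose:
  assumes "continuous_map X euclidean (f :: 'a \<Rightarrow> 'b::discrete_topology)"
  shows "continuous_map X euclidean (\<lambda>x. F (f x))"
  using continuous_map_compose[OF assms, of euclidean F] by (simp add: o_def)

lemma continuous_map_euclidean_pairedI:
  assumes "continuous_map X euclidean f" and "continuous_map X euclidean g"
  shows "continuous_map X euclidean (\<lambda>x. (f x, g x))"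
  using continuous_map_pairedI[OF assms] by simp

lemma cong_cmult_leftD:
  fixes a b c m :: int
  assumes "[c * a = c * b] (mod c * m)" and "c \<noteq> 0"
  shows "[a = b] (mod m)"
proof -
  have "c * m dvd c * (a - b)"
    using assms(1) by (simp add: cong_iff_dvd_diff right_diff_distrib)
  then show ?thesis
    using assms(2) by (simp add: cong_iff_dvd_diff)
qed

lemma div_mod_eq_mod_mult_div:
  fixes a b c :: int
  assumes "b > 0" and "c \<ge> 0"
  shows "a div b mod c = a mod (b * c) div b"
  using assms by (simp add: zmod_zmult2_eq)

lemma padic_int_cong:
  assumes "padic_int p x" and "m \<le> n"
  shows "[x n = x m] (mod p ^ m)"
  using assms(2)
proof (induction n rule: dec_induct)
  case base
  show ?case by simp
next
  case (step n)
  have "x (Suc n) mod p ^ n = x n mod p ^ n"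
    using assms(1) unfolding padic_int_def by (simp add: mod_pos_pos_trivial)
  then have "[x (Suc n) = x n] (mod p ^ m)"
    using step.hyps(1) by (metis cong_def cong_dvd_modulus le_imp_power_dvd)
  then show ?case using step.IH by (rule cong_trans)
qed

lemma cochain1_of_reductions:
  assumes "cochain1 T H n\<^sub>1 u" and "cochain1 T H n\<^sub>2 v"
    and "\<And>x. x \<in> H \<Longrightarrow> w x mod n = F (u x mod n\<^sub>1) (v x mod n\<^sub>2)"
  shows "cochain1 T H n w"
proof -
  have "continuous_map (subtopology T H) euclidean (\<lambda>x. (u x mod n\<^sub>1, v x mod n\<^sub>2))"
    using assms(1,2) unfolding cochain1_def by (rule continuous_map_euclidean_pairedI)
  then have "continuous_map (subtopology T H) euclidean (\<lambda>x. F (u x mod n\<^sub>1) (v x mod n\<^sub>2))"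
    using continuous_map_discrete_compose[where F = "case_prod F"] by fastforce
  then show ?thesis
    unfolding cochain1_def by (rule continuous_map_eq) (use assms(3) in auto)
qed

locale oriented_subgroup =
  fixes p :: int and G :: "('g, 'b) monoid_scheme" (structure)
    and T :: "'g topology" and \<theta> :: "'g \<Rightarrow> nat \<Rightarrow> int" and H :: "'g set"
  assumes p_pos: "p > 0"
    and oriented: "orientation p G T \<theta>"
    and top_group: "topological_group G T"
    and H_subgroup: "subgroup H G"
begin

lemma in_carrier: "g \<in> H \<Longrightarrow> g \<in> carrier G"
  using subgroup.subset[OF H_subgroup] by blast

lemma mult_closed [simp]: "g \<in> H \<Longrightarrow> h \<in> H \<Longrightarrow> g \<otimes> h \<in> H"
  using subgroup.m_closed[OF H_subgroup] .

lemma mult_assoc: "g \<in> H \<Longrightarrow> h \<in> H \<Longrightarrow> l \<in> H \<Longrightarrow> g \<otimes> h \<otimes> l = g \<otimes> (h \<otimes> l)"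
  using top_group in_carrier unfolding topological_group_def
  by (simp add: group.is_monoid monoid.m_assoc)

lemma theta_cong: "g \<in> H \<Longrightarrow> m \<le> n \<Longrightarrow> [\<theta> g n = \<theta> g m] (mod p ^ m)"
  using oriented in_carrier unfolding orientation_def by (blast intro: padic_int_cong)

lemma theta_level_one: "g \<in> H \<Longrightarrow> \<theta> g 1 = 1"
  using oriented in_carrier unfolding orientation_def by blast

lemma theta_mult_cong: "g \<in> H \<Longrightarrow> h \<in> H \<Longrightarrow> [\<theta> (g \<otimes> h) m = \<theta> g m * \<theta> h m] (mod p ^ m)"
  using oriented in_carrier unfolding orientation_def by (simp add: cong_def)

text \<open>The level \<open>m\<close> only selects \<open>\<theta>\<close> modulo \<open>p\<^sup>m\<close>;
  reduction modulo a power of \<open>p\<close> is left to the congruences in which they occur, so the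
  same integer cochain can be read at several levels.\<close>

definition delta1 :: "nat \<Rightarrow> ('g \<Rightarrow> int) \<Rightarrow> 'g \<Rightarrow> 'g \<Rightarrow> int" where
  "delta1 m b g h = \<theta> g m * b h - b (g \<otimes> h) + b g"

definition delta2 :: "nat \<Rightarrow> ('g \<Rightarrow> 'g \<Rightarrow> int) \<Rightarrow> 'g \<Rightarrow> 'g \<Rightarrow> 'g \<Rightarrow> int" where
  "delta2 m c g h l = \<theta> g m * c h l - c (g \<otimes> h) l + c g (h \<otimes> l) - c g h"

lemma cocycle1_iff:
  "cocycle1 p G T \<theta> H m f \<longleftrightarrow>
     cochain1 T H (p ^ m) f \<and> (\<forall>g\<in>H. \<forall>h\<in>H. [delta1 m f g h = 0] (mod p ^ m))"
proof -
  have "f (g \<otimes> h) - (f g + \<theta> g m * f h) = - delta1 m f g h" for g h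
    by (simp add: delta1_def)
  then show ?thesis
    unfolding cocycle1_def by (simp add: cong_iff_dvd_diff)
qed

lemma cocycle2_iff:
  "cocycle2 p G T \<theta> H m c \<longleftrightarrow>
     cochain2 T H (p ^ m) c \<and> (\<forall>g\<in>H. \<forall>h\<in>H. \<forall>l\<in>H. [delta2 m c g h l = 0] (mod p ^ m))"
  unfolding cocycle2_def delta2_def ..

lemma coboundary2_iff:
  "coboundary2 p G T \<theta> H m c \<longleftrightarrow>
     (\<exists>b. cochain1 T H (p ^ m) b \<and> (\<forall>g\<in>H. \<forall>h\<in>H. [c g h = delta1 m b g h] (mod p ^ m)))"
  unfolding coboundary2_def delta1_def ..

lemma coboundary1_level_one_iff: "coboundary1 p \<theta> H 1 f \<longleftrightarrow> (\<forall>g\<in>H. p dvd f g)"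
proof -
  have "[f g = \<theta> g 1 * a - a] (mod p ^ 1) \<longleftrightarrow> p dvd f g" if "g \<in> H" for g a
    using theta_level_one[OF that] by (simp add: cong_0_iff)
  then show ?thesis
    unfolding coboundary1_def by blast
qed

lemma delta1_cong:
  assumes "g \<in> H" "h \<in> H" and "\<And>x. x \<in> H \<Longrightarrow> [u x = v x] (mod n)"
    and "[\<theta> g m = \<theta> g m'] (mod n)"
  shows "[delta1 m u g h = delta1 m' v g h] (mod n)"
  unfolding delta1_def using assms by (intro cong_add cong_diff cong_mult) auto

lemma delta2_cong:
  assumes "g \<in> H" "h \<in> H" "l \<in> H" and "\<And>x y. x \<in> H \<Longrightarrow> y \<in> H \<Longrightarrow> [c x y = c' x y] (mod n)"
    and "[\<theta> g m = \<theta> g m'] (mod n)"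
  shows "[delta2 m c g h l = delta2 m' c' g h l] (mod n)"
  unfolding delta2_def using assms by (intro cong_add cong_diff cong_mult) auto

lemma delta1_add_scaled: "delta1 m (\<lambda>x. u x + a * v x) g h = delta1 m u g h + a * delta1 m v g h"
  by (simp add: delta1_def algebra_simps)

lemma delta2_scaled: "delta2 m (\<lambda>x y. a * c x y) g h l = a * delta2 m c g h l"
  by (simp add: delta2_def algebra_simps)

lemma delta2_delta1:
  assumes "g \<in> H" "h \<in> H" "l \<in> H"
  shows "delta2 m (delta1 m b) g h l = (\<theta> g m * \<theta> h m - \<theta> (g \<otimes> h) m) * b l"
  using assms by (simp add: delta1_def delta2_def mult_assoc algebra_simps)

lemma delta2_delta1_cong_0:
  assumes "g \<in> H" "h \<in> H" "l \<in> H"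
  shows "[delta2 m (delta1 m b) g h l = 0] (mod p ^ m)"
proof -
  have "[\<theta> g m * \<theta> h m - \<theta> (g \<otimes> h) m = 0] (mod p ^ m)"
    using theta_mult_cong[OF assms(1,2)] by (simp add: cong_iff_dvd_diff dvd_diff_commute)
  then show ?thesis
    unfolding delta2_delta1[OF assms] using cong_scalar_right by fastforce
qed

lemma mult_p_delta1:
  assumes "g \<in> H" "h \<in> H"
  shows "[p * delta1 (Suc k) e g h = p * delta1 k e g h] (mod p ^ Suc k)"
  using cong_cmult_leftI[OF delta1_cong[OF assms _ theta_cong]] assms by simp

lemma mult_p_delta2:
  assumes "g \<in> H" "h \<in> H" "l \<in> H"
  shows "[p * delta2 (Suc k) c g h l = p * delta2 k c g h l] (mod p ^ Suc k)"
  using cong_cmult_leftI[OF delta2_cong[OF assms _ theta_cong]] assms by simp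

lemma cochain2_of_cochain1:
  assumes "cochain1 T H n u"
    and "\<And>g h. g \<in> H \<Longrightarrow> h \<in> H \<Longrightarrow>
      w g h mod n' = F (\<theta> g m) (u g mod n) (u (g \<otimes> h) mod n) (u h mod n)"
  shows "cochain2 T H n' w"
proof -
  let ?S = "subtopology (prod_topology T T) (H \<times> H)"
  have u: "continuous_map (subtopology T H) euclidean (\<lambda>x. u x mod n)"
    using assms(1) unfolding cochain1_def .
  have fst: "continuous_map ?S (subtopology T H) fst"
    using continuous_map_from_subtopology[OF continuous_map_fst]
    by (auto simp: continuous_map_in_subtopology)
  have snd: "continuous_map ?S (subtopology T H) snd"
    using continuous_map_from_subtopology[OF continuous_map_snd]
    by (auto simp: continuous_map_in_subtopology)
  have "continuous_map (prod_topology T T) T (\<lambda>z. fst z \<otimes> snd z)"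
    using top_group unfolding topological_group_def by (simp add: case_prod_unfold)
  then have mult: "continuous_map ?S (subtopology T H) (\<lambda>z. fst z \<otimes> snd z)"
    by (auto simp: continuous_map_in_subtopology continuous_map_from_subtopology)
  have "continuous_map T euclidean (\<lambda>g. \<theta> g m)"
    using oriented unfolding orientation_def by blast
  then have theta: "continuous_map ?S euclidean (\<lambda>z. \<theta> (fst z) m)"
    using continuous_map_compose[OF continuous_map_from_subtopology[OF continuous_map_fst]]
    by (simp add: o_def)
  have "continuous_map ?S euclidean
      (\<lambda>z. (\<theta> (fst z) m, u (fst z) mod n, u (fst z \<otimes> snd z) mod n, u (snd z) mod n))"
    using continuous_map_compose[OF fst u] continuous_map_compose[OF mult u]
      continuous_map_compose[OF snd u] theta
    by (intro continuous_map_euclidean_pairedI) (simp_all add: o_def)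
  then have "continuous_map ?S euclidean
      (\<lambda>z. F (\<theta> (fst z) m) (u (fst z) mod n) (u (fst z \<otimes> snd z) mod n) (u (snd z) mod n))"
    using continuous_map_discrete_compose[where F = "\<lambda>(a, b, c, d). F a b c d"] by fastforce
  then show ?thesis
    unfolding cochain2_def by (rule continuous_map_eq) (use assms(2) in auto)
qed

text \<open>The connecting map \<open>H\<^sup>1(\<int>/p) \<rightarrow> H\<^sup>2(\<int>/p\<^sup>k)\<close>: lift to residues in \<open>[0, p)\<close>,
  take the coboundary at level \<open>k + 1\<close>, divide by \<open>p\<close>.\<close>

definition connecting :: "nat \<Rightarrow> ('g \<Rightarrow> int) \<Rightarrow> 'g \<Rightarrow> 'g \<Rightarrow> int" where
  "connecting k f g h = delta1 (Suc k) (\<lambda>x. f x mod p) g h div p"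

lemma mult_p_connecting:
  assumes f: "cocycle1 p G T \<theta> H 1 f" and "g \<in> H" "h \<in> H"
  shows "p * connecting k f g h = delta1 (Suc k) (\<lambda>x. f x mod p) g h"
proof -
  have "[delta1 (Suc k) (\<lambda>x. f x mod p) g h = delta1 1 f g h] (mod p)"
    using assms(2,3) theta_cong[OF assms(2), of 1 "Suc k"] by (intro delta1_cong) simp_all
  also have "[delta1 1 f g h = 0] (mod p)"
    using f assms(2,3) by (simp add: cocycle1_iff)
  finally show ?thesis
    unfolding connecting_def by (simp add: cong_0_iff)
qed

lemma connecting_cocycle:
  assumes f: "cocycle1 p G T \<theta> H 1 f"
  shows "cocycle2 p G T \<theta> H k (connecting k f)"
  unfolding cocycle2_iff
proof (intro conjI ballI)
  have "cochain1 T H p f"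
    using f by (simp add: cocycle1_iff)
  then show "cochain2 T H (p ^ k) (connecting k f)"
    by (rule cochain2_of_cochain1[where F = "\<lambda>a b c d. (a * d - c + b) div p mod p ^ k"])
      (simp add: connecting_def delta1_def)
next
  fix g h l assume H: "g \<in> H" "h \<in> H" "l \<in> H"
  let ?c = "connecting k f" and ?f = "\<lambda>x. f x mod p"
  have "[p * delta2 k ?c g h l = p * delta2 (Suc k) ?c g h l] (mod p ^ Suc k)"
    using mult_p_delta2[OF H] by (rule cong_sym)
  also have "p * delta2 (Suc k) ?c g h l = delta2 (Suc k) (\<lambda>x y. p * ?c x y) g h l"
    by (simp add: delta2_scaled)
  also have "[\<dots> = delta2 (Suc k) (delta1 (Suc k) ?f) g h l] (mod p ^ Suc k)"
    using H by (intro delta2_cong) (simp_all add: mult_p_connecting[OF f])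
  also have "[delta2 (Suc k) (delta1 (Suc k) ?f) g h l = 0] (mod p ^ Suc k)"
    using H by (rule delta2_delta1_cong_0)
  finally have "[p * delta2 k ?c g h l = p * 0] (mod p * p ^ k)"
    by simp
  then show "[delta2 k ?c g h l = 0] (mod p ^ k)"
    using p_pos by (auto intro: cong_cmult_leftD)
qed

lemma mult_p_connecting_coboundary:
  assumes f: "cocycle1 p G T \<theta> H 1 f"
  shows "coboundary2 p G T \<theta> H (Suc k) (\<lambda>g h. p * connecting k f g h)"
  unfolding coboundary2_iff
proof (intro exI conjI ballI)
  have f_cochain: "cochain1 T H p f"
    using f by (simp add: cocycle1_iff)
  show "cochain1 T H (p ^ Suc k) (\<lambda>x. f x mod p)"
    by (rule cochain1_of_reductions[OF f_cochain f_cochain, where F = "\<lambda>a b. a mod p ^ Suc k"])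
      simp
  show "[p * connecting k f g h = delta1 (Suc k) (\<lambda>x. f x mod p) g h] (mod p ^ Suc k)"
    if "g \<in> H" "h \<in> H" for g h
    using mult_p_connecting[OF f that] by simp
qed

lemma lift_of_connecting_coboundary:
  assumes f: "cocycle1 p G T \<theta> H 1 f" and "coboundary2 p G T \<theta> H k (connecting k f)"
  shows "\<exists>f'. cocycle1 p G T \<theta> H (Suc k) f' \<and> coboundary1 p \<theta> H 1 (\<lambda>g. f g - f' g)"
proof -
  obtain e where e: "cochain1 T H (p ^ k) e"
    and ce: "\<And>g h. g \<in> H \<Longrightarrow> h \<in> H \<Longrightarrow> [connecting k f g h = delta1 k e g h] (mod p ^ k)"
    using assms(2) unfolding coboundary2_iff by blast
  define f' where "f' x = f x mod p + (- p) * e x" for x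
  have "cocycle1 p G T \<theta> H (Suc k) f'"
    unfolding cocycle1_iff
  proof (intro conjI ballI)
    have f_cochain: "cochain1 T H p f"
      using f by (simp add: cocycle1_iff)
    have "f' x mod p ^ Suc k = (f x mod p - p * (e x mod p ^ k)) mod p ^ Suc k" for x
    proof -
      have "p * (e x mod p ^ k) = p * e x mod p ^ Suc k"
        by (simp only: power_Suc mod_mult_mult1)
      then have "(f x mod p - p * (e x mod p ^ k)) mod p ^ Suc k = (f x mod p - p * e x) mod p ^ Suc k"
        by (simp only: mod_diff_right_eq)
      then show ?thesis
        by (simp add: f'_def)
    qed
    then show "cochain1 T H (p ^ Suc k) f'"
      by (intro cochain1_of_reductions[OF f_cochain e]) simp
  next
    fix g h assume H: "g \<in> H" "h \<in> H"
    have "delta1 (Suc k) f' g h = p * connecting k f g h - p * delta1 (Suc k) e g h"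
      unfolding f'_def delta1_add_scaled using mult_p_connecting[OF f H] by simp
    also have "[\<dots> = p * delta1 k e g h - p * delta1 k e g h] (mod p ^ Suc k)"
      using cong_cmult_leftI[OF ce[OF H], of p] mult_p_delta1[OF H, where e = e]
      by (intro cong_diff) simp_all
    finally show "[delta1 (Suc k) f' g h = 0] (mod p ^ Suc k)"
      by simp
  qed
  moreover have "coboundary1 p \<theta> H 1 (\<lambda>g. f g - f' g)"
    unfolding coboundary1_level_one_iff
  proof
    fix g
    have "f g - f' g = (f g - f g mod p) + p * e g"
      by (simp add: f'_def)
    moreover have "p dvd f g - f g mod p"
      by (rule dvd_minus_mod)
    ultimately show "p dvd f g - f' g"
      by (metis dvd_add dvd_triv_left)
  qed
  ultimately show ?thesis by blast
qed

lemma H1_reduction_surjective_if_H2_mult_p_injective: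
  assumes "H2_mult_p_injective p G T \<theta> H (Suc k)"
  shows "H1_reduction_surjective p G T \<theta> H (Suc k)"
  unfolding H1_reduction_surjective_def
proof (intro allI impI)
  fix f assume f: "cocycle1 p G T \<theta> H 1 f"
  have "coboundary2 p G T \<theta> H k (connecting k f)"
    using assms connecting_cocycle[OF f] mult_p_connecting_coboundary[OF f]
    unfolding H2_mult_p_injective_def by simp
  then show "\<exists>f'. cocycle1 p G T \<theta> H (Suc k) f' \<and> coboundary1 p \<theta> H 1 (\<lambda>g. f g - f' g)"
    by (rule lift_of_connecting_coboundary[OF f])
qed

lemma H2_mult_p_injective_if_H1_reduction_surjective:
  assumes "H1_reduction_surjective p G T \<theta> H (Suc k)"
  shows "H2_mult_p_injective p G T \<theta> H (Suc k)"
  unfolding H2_mult_p_injective_def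
proof (intro allI impI)
  fix c assume "coboundary2 p G T \<theta> H (Suc k) (\<lambda>g h. p * c g h)"
  then obtain b where b: "cochain1 T H (p ^ Suc k) b"
    and pc: "\<And>g h. g \<in> H \<Longrightarrow> h \<in> H \<Longrightarrow> [p * c g h = delta1 (Suc k) b g h] (mod p ^ Suc k)"
    unfolding coboundary2_iff by blast
  have "cocycle1 p G T \<theta> H 1 b"
    unfolding cocycle1_iff
  proof (intro conjI ballI)
    show "cochain1 T H (p ^ 1) b"
      by (rule cochain1_of_reductions[OF b b, where F = "\<lambda>u v. u mod p"]) (simp add: mod_mod_cancel)
  next
    fix g h assume H: "g \<in> H" "h \<in> H"
    have "[delta1 1 b g h = delta1 (Suc k) b g h] (mod p)"
      using H theta_cong[OF H(1), of 1 "Suc k"] by (intro delta1_cong) (simp_all add: cong_sym)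
    also have "[delta1 (Suc k) b g h = p * c g h] (mod p)"
      using cong_dvd_modulus[OF pc[OF H]] by (simp add: cong_sym)
    also have "[p * c g h = 0] (mod p)"
      by (simp add: cong_0_iff)
    finally show "[delta1 1 b g h = 0] (mod p ^ 1)"
      by simp
  qed
  then obtain f' where f': "cocycle1 p G T \<theta> H (Suc k) f'"
    and b_f': "\<And>g. g \<in> H \<Longrightarrow> p dvd b g - f' g"
    using assms unfolding H1_reduction_surjective_def coboundary1_level_one_iff by blast
  define e where "e x = (b x - f' x) div p" for x
  have b_eq: "b x = f' x + p * e x" if "x \<in> H" for x
    using b_f'[OF that] by (simp add: e_def)
  show "coboundary2 p G T \<theta> H (Suc k - 1) c"
    unfolding coboundary2_iff diff_Suc_1
  proof (intro exI conjI ballI)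
    have "cochain1 T H (p ^ Suc k) f'"
      using f' by (simp add: cocycle1_iff)
    then show "cochain1 T H (p ^ k) e"
      by (rule cochain1_of_reductions[OF b, where F = "\<lambda>u v. (u - v) mod p ^ Suc k div p"])
        (use p_pos in \<open>simp add: e_def div_mod_eq_mod_mult_div mod_diff_eq\<close>)
  next
    fix g h assume H: "g \<in> H" "h \<in> H"
    have "[p * c g h = delta1 (Suc k) b g h] (mod p ^ Suc k)"
      by (rule pc[OF H])
    also have "delta1 (Suc k) b g h = delta1 (Suc k) f' g h + p * delta1 (Suc k) e g h"
      using H by (simp add: delta1_def b_eq algebra_simps)
    also have "[\<dots> = 0 + p * delta1 k e g h] (mod p ^ Suc k)"
      using f' H mult_p_delta1[OF H] by (intro cong_add) (simp_all add: cocycle1_iff)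
    finally have "[p * c g h = p * delta1 k e g h] (mod p * p ^ k)"
      by simp
    then show "[c g h = delta1 k e g h] (mod p ^ k)"
      using p_pos by (auto intro: cong_cmult_leftD)
  qed
qed

lemma H1_reduction_surjective_iff_H2_mult_p_injective:
  assumes "n \<ge> 1"
  shows "H1_reduction_surjective p G T \<theta> H n \<longleftrightarrow> H2_mult_p_injective p G T \<theta> H n"
proof -
  obtain k where "n = Suc k"
    using assms by (cases n) auto
  then show ?thesis
    using H1_reduction_surjective_if_H2_mult_p_injective
      H2_mult_p_injective_if_H1_reduction_surjective by blast
qed

end

theorem mainTheorem8:
  fixes G :: "('g, 'b) monoid_scheme" and T :: "'g topology"
    and \<theta> :: "'g \<Rightarrow> nat \<Rightarrow> int" and p :: int
  assumes "prime p"
    and "profinite_group G T"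
    and "orientation p G T \<theta>"
  shows "cyclotomic p G T \<theta> \<longleftrightarrow>
    (\<forall>n H. n \<ge> 1 \<longrightarrow> closed_subgroup H G T \<longrightarrow> H2_mult_p_injective p G T \<theta> H n)"
proof -
  have surj_iff_inj: "H1_reduction_surjective p G T \<theta> H n \<longleftrightarrow> H2_mult_p_injective p G T \<theta> H n"
    if "closed_subgroup H G T" and "n \<ge> 1" for H n
  proof -
    interpret oriented_subgroup p G T \<theta> H
      by (rule oriented_subgroup.intro)
        (use assms that(1) in \<open>auto simp: prime_gt_0_int profinite_group_def closed_subgroup_def\<close>)
    show ?thesis
      using that(2) by (rule H1_reduction_surjective_iff_H2_mult_p_injective)
  qed
  show ?thesis
    unfolding cyclotomic_def using surj_iff_inj by blast
qed

end
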